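(* Let $S$ and $T$ be semigroups such that for all $\mathcal{R}$-incomparable elements $u,v\in T$ there exist $a,b\in S$ and a homomorphism $\phi:S\to T$ with $a\phi=u$, $b\phi=v$ and $(aS\cap bS)\phi=uT\cap vT$. If $S$ is right ideal Howson then so is $T$.
   Context: A semigroup $S$ is right ideal Howson if the intersection of any two finitely generated right ideals of $S$ is finitely generated, where a right ideal $I$ is finitely generated if $I=XS^1$ for finite $X\subseteq I$ ($S^1$ is $S$ if $S$ is a monoid, otherwise $S$ with an identity adjoined). Elements $u,v\in T$ are $\mathcal{R}$-incomparable if $u\notin vT^1$ and $v\notin uT^1$. *)

theory Defs
  imports Main
begin

text \<open>Semigroups are modelled as types of class semigroup_mult.
  For X a subset of S, the right ideal X S^1 equals X \<union> X S.\<close>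

definition right_ideal_gen :: "'a::semigroup_mult set \<Rightarrow> 'a set" where
  "right_ideal_gen X = X \<union> {x * s | x s. x \<in> X}"

definition right_ideal :: "'a::semigroup_mult set \<Rightarrow> bool" where
  "right_ideal I \<longleftrightarrow> (\<forall>x\<in>I. \<forall>s. x * s \<in> I)"

definition fg_right_ideal :: "'a::semigroup_mult set \<Rightarrow> bool" where
  "fg_right_ideal I \<longleftrightarrow> right_ideal I \<and>
     (\<exists>X. finite X \<and> X \<subseteq> I \<and> I = right_ideal_gen X)"

definition right_ideal_Howson :: "'a::semigroup_mult itself \<Rightarrow> bool" where
  "right_ideal_Howson _ \<longleftrightarrow>
     (\<forall>I J :: 'a set. fg_right_ideal I \<and> fg_right_ideal J \<longrightarrow> fg_right_ideal (I \<inter> J))"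

definition R_incomparable :: "'a::semigroup_mult \<Rightarrow> 'a \<Rightarrow> bool" where
  "R_incomparable u v \<longleftrightarrow> u \<notin> right_ideal_gen {v} \<and> v \<notin> right_ideal_gen {u}"

definition sg_hom :: "('a::semigroup_mult \<Rightarrow> 'b::semigroup_mult) \<Rightarrow> bool" where
  "sg_hom f \<longleftrightarrow> (\<forall>x y. f (x * y) = f x * f y)"

end

theory Submission
  imports Defs
begin

text \<open>The intersection of the right ideals generated by finite sets X and Y is the finite
  union of the principal intersections xT^1 \<inter> yT^1 with x \<in> X, y \<in> Y, so only these need to
  be finitely generated. If x and y are \<R>-comparable, the intersection is the smaller principal
  ideal. Otherwise xT^1 \<inter> yT^1 = xT \<inter> yT = \<phi>(aS \<inter> bS) for the a, b, \<phi> of the hypothesis.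
  Since \<phi> preserves \<R>-comparability, a and b are \<R>-incomparable as well, so
  aS \<inter> bS = aS^1 \<inter> bS^1 is finitely generated by the Howson property of S; and the image of
  its generators generates \<phi>(aS \<inter> bS), because that image is a right ideal of T.\<close>

lemma right_ideal_right_ideal_gen: "right_ideal (right_ideal_gen X)"
  unfolding right_ideal_def right_ideal_gen_def by (fastforce simp: mult.assoc)

lemma fg_right_ideal_iff:
  "fg_right_ideal I \<longleftrightarrow> (\<exists>X. finite X \<and> X \<subseteq> I \<and> I = right_ideal_gen X)"
  unfolding fg_right_ideal_def using right_ideal_right_ideal_gen by blast

lemma right_ideal_gen_least: "right_ideal I \<Longrightarrow> X \<subseteq> I \<Longrightarrow> right_ideal_gen X \<subseteq> I"
  unfolding right_ideal_def right_ideal_gen_def by blast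

lemma right_ideal_gen_UN: "right_ideal_gen X = (\<Union>x\<in>X. right_ideal_gen {x})"
  unfolding right_ideal_gen_def by blast

lemma right_ideal_gen_singleton_mono:
  "x \<in> right_ideal_gen {y} \<Longrightarrow> right_ideal_gen {x} \<subseteq> right_ideal_gen {y}"
  unfolding right_ideal_gen_def by (auto simp: mult.assoc)

lemma fg_right_ideal_gen_singleton: "fg_right_ideal (right_ideal_gen {x})"
  unfolding fg_right_ideal_iff right_ideal_gen_def by blast

lemma fg_right_ideal_Un:
  assumes "fg_right_ideal I" "fg_right_ideal J"
  shows "fg_right_ideal (I \<union> J)"
proof -
  obtain X where "finite X" "X \<subseteq> I" "I = right_ideal_gen X"
    using assms(1) fg_right_ideal_iff by blast
  moreover obtain Y where "finite Y" "Y \<subseteq> J" "J = right_ideal_gen Y"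
    using assms(2) fg_right_ideal_iff by blast
  ultimately show ?thesis
    unfolding fg_right_ideal_iff
    by (intro exI[of _ "X \<union> Y"]) (auto simp: right_ideal_gen_def)
qed

lemma fg_right_ideal_UN:
  "finite P \<Longrightarrow> (\<And>p. p \<in> P \<Longrightarrow> fg_right_ideal (F p)) \<Longrightarrow> fg_right_ideal (\<Union>p\<in>P. F p)"
proof (induction P rule: finite_induct)
  case empty
  show ?case unfolding fg_right_ideal_iff right_ideal_gen_def by auto
qed (simp add: fg_right_ideal_Un)

lemma right_ideal_Howson_if_principal:
  assumes "\<And>x y :: 'a::semigroup_mult.
    fg_right_ideal (right_ideal_gen {x} \<inter> right_ideal_gen {y})"
  shows "right_ideal_Howson TYPE('a)"
  unfolding right_ideal_Howson_def
proof (intro allI impI)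
  fix I J :: "'a set"
  assume "fg_right_ideal I \<and> fg_right_ideal J"
  then obtain X Y where XY: "finite X" "I = right_ideal_gen X" "finite Y" "J = right_ideal_gen Y"
    unfolding fg_right_ideal_iff by blast
  then have "I \<inter> J = (\<Union>p\<in>X \<times> Y. right_ideal_gen {fst p} \<inter> right_ideal_gen {snd p})"
    unfolding right_ideal_gen_UN[of X] right_ideal_gen_UN[of Y] by auto
  moreover have "fg_right_ideal \<dots>"
    using XY assms by (intro fg_right_ideal_UN) auto
  ultimately show "fg_right_ideal (I \<inter> J)" by simp
qed

lemma R_incomparable_Int_eq:
  assumes "R_incomparable x y"
  shows "right_ideal_gen {x} \<inter> right_ideal_gen {y} = range ((*) x) \<inter> range ((*) y)"
  using assms unfolding R_incomparable_def right_ideal_gen_def by auto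

lemma sg_hom_image_right_ideal_gen:
  assumes "sg_hom \<phi>"
  shows "\<phi> ` right_ideal_gen Z \<subseteq> right_ideal_gen (\<phi> ` Z)"
  using assms unfolding sg_hom_def right_ideal_gen_def by blast

lemma sg_hom_image_fg_right_ideal:
  assumes "sg_hom \<phi>" "fg_right_ideal K" "right_ideal (\<phi> ` K)"
  shows "fg_right_ideal (\<phi> ` K)"
proof -
  obtain Z where "finite Z" "Z \<subseteq> K" "K = right_ideal_gen Z"
    using assms(2) fg_right_ideal_iff by blast
  moreover from this have "\<phi> ` K = right_ideal_gen (\<phi> ` Z)"
    using sg_hom_image_right_ideal_gen[OF assms(1), of Z]
      right_ideal_gen_least[OF assms(3), of "\<phi> ` Z"]
    by (simp add: image_mono subset_antisym)
  ultimately show ?thesis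
    unfolding fg_right_ideal_iff by (intro exI[of _ "\<phi> ` Z"]) auto
qed

lemma sg_hom_reflects_R_incomparable:
  assumes "sg_hom \<phi>" "R_incomparable (\<phi> a) (\<phi> b)"
  shows "R_incomparable a b"
proof -
  have "\<phi> x \<in> right_ideal_gen {\<phi> y}" if "x \<in> right_ideal_gen {y}" for x y
    using that sg_hom_image_right_ideal_gen[OF assms(1), of "{y}"] by auto
  then show ?thesis using assms(2) unfolding R_incomparable_def by blast
qed

theorem mainTheorem19:
  assumes "\<And>u v :: 'b::semigroup_mult. R_incomparable u v \<Longrightarrow>
     \<exists>(a::'a::semigroup_mult) b \<phi>. sg_hom \<phi> \<and> \<phi> a = u \<and> \<phi> b = v \<and>
        \<phi> ` (range ((*) a) \<inter> range ((*) b)) = range ((*) u) \<inter> range ((*) v)"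
    and "right_ideal_Howson TYPE('a)"
  shows "right_ideal_Howson TYPE('b)"
proof (rule right_ideal_Howson_if_principal)
  fix x y :: 'b
  show "fg_right_ideal (right_ideal_gen {x} \<inter> right_ideal_gen {y})"
  proof (cases "R_incomparable x y")
    case False
    then consider "right_ideal_gen {x} \<subseteq> right_ideal_gen {y}"
      | "right_ideal_gen {y} \<subseteq> right_ideal_gen {x}"
      unfolding R_incomparable_def using right_ideal_gen_singleton_mono by blast
    then show ?thesis
      by cases (simp_all add: Int_absorb1 Int_absorb2 fg_right_ideal_gen_singleton)
  next
    case True
    then obtain a b and \<phi> :: "'a \<Rightarrow> 'b" where \<phi>: "sg_hom \<phi>" "\<phi> a = x" "\<phi> b = y"
      and image: "\<phi> ` (range ((*) a) \<inter> range ((*) b)) = range ((*) x) \<inter> range ((*) y)"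
      using assms(1)[OF True] by (elim exE conjE) blast
    have "R_incomparable a b"
      using sg_hom_reflects_R_incomparable \<phi> True by blast
    moreover have "fg_right_ideal (right_ideal_gen {a} \<inter> right_ideal_gen {b})"
      using assms(2) fg_right_ideal_gen_singleton unfolding right_ideal_Howson_def by blast
    ultimately have "fg_right_ideal (range ((*) a) \<inter> range ((*) b))"
      by (simp add: R_incomparable_Int_eq)
    moreover have "right_ideal (right_ideal_gen {x} \<inter> right_ideal_gen {y})"
      using right_ideal_right_ideal_gen unfolding right_ideal_def by blast
    ultimately show ?thesis
      using sg_hom_image_fg_right_ideal[OF \<phi>(1), of "range ((*) a) \<inter> range ((*) b)"] image
      by (simp add: R_incomparable_Int_eq[OF True])
  qed
qed

end
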